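(* Let $G$ be a simplicial group such that $\pi_1(G)$ is finite. Then $H^2(G,\mathbb Z)\cong H^2(\pi_0(G),\mathbb Z)$, where $\mathbb Z$ carries the trivial action.
   Context: Simplicial group $G$ with faces $d_k$; Moore complex $N_0G=G_0$, $N_nG=\bigcap_{k=1}^n\ker d_k$ with differential $d_0$; $B_nNG=d_0(N_{n+1}G)$; $\pi_0(G)=G_0/B_0NG$, $\pi_1(G)=(N_1G\cap\ker d_0)/B_1NG$. $H^n(G,M)$ is the cohomology of $C^n(G,M)=\mathrm{Map}(G_{n-1}\times\cdots\times G_0,M)$ with $(dc)(g_n,\dots,g_0)=c(d_0g_n,\dots,d_0g_1)+\sum_{k=1}^n(-1)^kc(d_kg_n,\dots,d_kg_{k+1},(d_kg_k)g_{k-1},g_{k-2},\dots,g_0)+(-1)^{n+1}\langle g_n\rangle\cdot c(g_{n-1},\dots,g_0)$, $\langle g\rangle$ being the class of $d_1\cdots d_n(g)$ in $\pi_0(G)$ (for trivial coefficients the action is trivial). $H^2(\pi_0(G),\mathbb Z)$ is ordinary group cohomology. *)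

theory Defs
  imports "HOL-Algebra.Coset"
begin

definition simplicial_group ::
  "(nat \<Rightarrow> 'a monoid) \<Rightarrow> (nat \<Rightarrow> nat \<Rightarrow> 'a \<Rightarrow> 'a) \<Rightarrow> (nat \<Rightarrow> nat \<Rightarrow> 'a \<Rightarrow> 'a) \<Rightarrow> bool" where
  "simplicial_group G d s \<longleftrightarrow>
     (\<forall>n. group (G n)) \<and>
     (\<forall>n i. 1 \<le> n \<and> i \<le> n \<longrightarrow> d n i \<in> hom (G n) (G (n - 1))) \<and>
     (\<forall>n j. j \<le> n \<longrightarrow> s n j \<in> hom (G n) (G (Suc n))) \<and>
     (\<forall>n i j x. 2 \<le> n \<and> i < j \<and> j \<le> n \<and> x \<in> carrier (G n) \<longrightarrow>
        d (n - 1) i (d n j x) = d (n - 1) (j - 1) (d n i x)) \<and>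
     (\<forall>n i j x. i < j \<and> j \<le> n \<and> x \<in> carrier (G n) \<longrightarrow>
        d (Suc n) i (s n j x) = s (n - 1) (j - 1) (d n i x)) \<and>
     (\<forall>n i j x. j \<le> n \<and> (i = j \<or> i = Suc j) \<and> x \<in> carrier (G n) \<longrightarrow>
        d (Suc n) i (s n j x) = x) \<and>
     (\<forall>n i j x. Suc j < i \<and> i \<le> Suc n \<and> j \<le> n \<and> x \<in> carrier (G n) \<longrightarrow>
        d (Suc n) i (s n j x) = s (n - 1) j (d n (i - 1) x)) \<and>
     (\<forall>n i j x. i \<le> j \<and> j \<le> n \<and> x \<in> carrier (G n) \<longrightarrow>
        s (Suc n) i (s n j x) = s (Suc n) (Suc j) (s n i x))"

definition N1 where "N1 G d = {g \<in> carrier (G 1). d 1 1 g = \<one>\<^bsub>G 0\<^esub>}"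
definition N2 where
  "N2 G d = {g \<in> carrier (G 2). d 2 1 g = \<one>\<^bsub>G 1\<^esub> \<and> d 2 2 g = \<one>\<^bsub>G 1\<^esub>}"
definition B0 where "B0 G d = d 1 0 ` N1 G d"
definition B1 where "B1 G d = d 2 0 ` N2 G d"

definition pi0 :: "(nat \<Rightarrow> 'a monoid) \<Rightarrow> (nat \<Rightarrow> nat \<Rightarrow> 'a \<Rightarrow> 'a) \<Rightarrow> 'a set monoid" where
  "pi0 G d = G 0 Mod B0 G d"

definition pi1 :: "(nat \<Rightarrow> 'a monoid) \<Rightarrow> (nat \<Rightarrow> nat \<Rightarrow> 'a \<Rightarrow> 'a) \<Rightarrow> 'a set monoid" where
  "pi1 G d = ((G 1)\<lparr>carrier := {g \<in> N1 G d. d 1 0 g = \<one>\<^bsub>G 0\<^esub>}\<rparr>) Mod B1 G d"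

definition cochain_grp :: "'x set \<Rightarrow> ('x \<Rightarrow> int) monoid" where
  "cochain_grp A = \<lparr>carrier = PiE A (\<lambda>_. (UNIV :: int set)),
                    mult = (\<lambda>c c'. \<lambda>x\<in>A. c x + c' x),
                    one = (\<lambda>x\<in>A. 0)\<rparr>"

definition cohom_grp ::
  "'x set \<Rightarrow> 'x set \<Rightarrow> (('x \<Rightarrow> int) \<Rightarrow> ('x \<Rightarrow> int)) \<Rightarrow> ('x \<Rightarrow> int) set \<Rightarrow> ('x \<Rightarrow> int) set monoid" where
  "cohom_grp A Bn delta Bd =
     ((cochain_grp A)\<lparr>carrier := {c \<in> carrier (cochain_grp A). delta c = \<one>\<^bsub>cochain_grp Bn\<^esub>}\<rparr>)
       Mod Bd"

text \<open>Tuples (g_{n-1},...,g_0) with g_i in G_i, represented as lists xs of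
  length n with xs ! i = g_{n-1-i}.\<close>
definition sX :: "(nat \<Rightarrow> 'a monoid) \<Rightarrow> nat \<Rightarrow> 'a list set" where
  "sX G n = {xs. length xs = n \<and> (\<forall>i<n. xs ! i \<in> carrier (G (n - 1 - i)))}"

text \<open>The differential C^n -> C^{n+1}; for an input list xs of length n+1,
  g_j = xs ! (n - j).  Trivial action of pi_0 on Z.\<close>
definition sdiff ::
  "(nat \<Rightarrow> 'a monoid) \<Rightarrow> (nat \<Rightarrow> nat \<Rightarrow> 'a \<Rightarrow> 'a) \<Rightarrow> nat \<Rightarrow> ('a list \<Rightarrow> int) \<Rightarrow> ('a list \<Rightarrow> int)" where
  "sdiff G d n c = (\<lambda>xs \<in> sX G (Suc n). let g = (\<lambda>j. xs ! (n - j)) in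
      c (map (\<lambda>j. d j 0 (g j)) (rev [1..<Suc n]))
    + (\<Sum>k\<in>{1..n}. (-1) ^ k *
         c (map (\<lambda>j. d j k (g j)) (rev [Suc k..<Suc n])
            @ [d k k (g k) \<otimes>\<^bsub>G (k - 1)\<^esub> g (k - 1)]
            @ map g (rev [0..<k - 1])))
    + (-1) ^ (Suc n) * c (map g (rev [0..<n])))"

text \<open>H^n(G, Z) for n >= 1.\<close>
definition sgrp_cohom ::
  "(nat \<Rightarrow> 'a monoid) \<Rightarrow> (nat \<Rightarrow> nat \<Rightarrow> 'a \<Rightarrow> 'a) \<Rightarrow> nat \<Rightarrow> ('a list \<Rightarrow> int) set monoid" where
  "sgrp_cohom G d n = cohom_grp (sX G n) (sX G (Suc n)) (sdiff G d n)
      (sdiff G d (n - 1) ` carrier (cochain_grp (sX G (n - 1))))"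

text \<open>Inhomogeneous cochains: functions on n-tuples (q_1,...,q_n), q_i = xs ! (i-1).\<close>
definition gX :: "('b, 'c) monoid_scheme \<Rightarrow> nat \<Rightarrow> 'b list set" where
  "gX Q n = {xs. length xs = n \<and> set xs \<subseteq> carrier Q}"

definition gdiff :: "('b, 'c) monoid_scheme \<Rightarrow> nat \<Rightarrow> ('b list \<Rightarrow> int) \<Rightarrow> ('b list \<Rightarrow> int)" where
  "gdiff Q n f = (\<lambda>xs \<in> gX Q (Suc n).
      f (tl xs)
    + (\<Sum>i\<in>{1..n}. (-1) ^ i *
         f (take (i - 1) xs @ [xs ! (i - 1) \<otimes>\<^bsub>Q\<^esub> xs ! i] @ drop (Suc i) xs))
    + (-1) ^ (Suc n) * f (butlast xs))"

text \<open>H^n(Q, Z) for n >= 1.\<close>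
definition grp_cohom :: "('b, 'c) monoid_scheme \<Rightarrow> nat \<Rightarrow> ('b list \<Rightarrow> int) set monoid" where
  "grp_cohom Q n = cohom_grp (gX Q n) (gX Q (Suc n)) (gdiff Q n)
      (gdiff Q (n - 1) ` carrier (cochain_grp (gX Q (n - 1))))"

end

theory Submission
  imports Defs
begin

text \<open>
  Let Q = pi_0(G) and write [g] for the class of g in G_0 / d_0(N_1 G).  A 2-cochain f of Q is
  inflated to the simplicial 2-cochain  (infl2 f)(x, g) = f([d_0 x], [g])  on G_1 x G_0.
  We show that inflation commutes with the differentials and, when pi_1(G) is finite, induces
  an isomorphism H^2(G, Z) ~ H^2(Q, Z).

  For a simplicial 2-cocycle c, the function z |-> c(z, 1) - c(1, 1) is
     additive on 1-cycles and kills B_1, hence vanishes when pi_1 is finite (the only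
     place where finiteness is used).  This allows to write the column x |-> c(x, 1) - c(1, 1)
     as a coboundary of some beta on G_0, and c - d(beta) is then a "reduced" cocycle,
     constant along degeneracies; reduced cocycles are inflations of pi_0-cocycles.
\<close>

lemma cochain_carrier: "carrier (cochain_grp A) = PiE A (\<lambda>_. UNIV)"
  by (simp add: cochain_grp_def)

lemma cochain_mult: "x \<otimes>\<^bsub>cochain_grp A\<^esub> y = (\<lambda>a\<in>A. x a + y a)"
  by (simp add: cochain_grp_def)

lemma cochain_one: "\<one>\<^bsub>cochain_grp A\<^esub> = (\<lambda>a\<in>A. 0)"
  by (simp add: cochain_grp_def)

lemma cochain_one_closed: "\<one>\<^bsub>cochain_grp A\<^esub> \<in> carrier (cochain_grp A)"
  by (simp add: cochain_one cochain_carrier)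

lemma cochain_comm_group: "comm_group (cochain_grp A)"
proof (rule comm_groupI)
  fix x assume x: "x \<in> carrier (cochain_grp A)"
  show "\<one>\<^bsub>cochain_grp A\<^esub> \<otimes>\<^bsub>cochain_grp A\<^esub> x = x"
    using x by (auto simp: cochain_grp_def PiE_def extensional_def)
  show "\<exists>y\<in>carrier (cochain_grp A). y \<otimes>\<^bsub>cochain_grp A\<^esub> x = \<one>\<^bsub>cochain_grp A\<^esub>"
    by (rule bexI[of _ "\<lambda>a\<in>A. - x a"]) (auto simp: cochain_grp_def)
qed (auto simp: cochain_grp_def add.commute add.assoc)

lemma cochain_group: "group (cochain_grp A)"
  using cochain_comm_group by (rule comm_group.axioms(2))

lemma cochain_eqI:
  assumes "f \<in> carrier (cochain_grp A)" "g \<in> carrier (cochain_grp A)"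
    and "\<And>x. x \<in> A \<Longrightarrow> f x = g x"
  shows "f = g"
  using assms by (auto simp: cochain_carrier intro: PiE_ext)

lemma cochain_homI:
  assumes closed: "\<And>c. c \<in> carrier (cochain_grp A) \<Longrightarrow> delta c \<in> carrier (cochain_grp B)"
    and additive: "\<And>c c' y. c \<in> carrier (cochain_grp A) \<Longrightarrow> c' \<in> carrier (cochain_grp A) \<Longrightarrow>
        y \<in> B \<Longrightarrow> delta (\<lambda>a\<in>A. c a + c' a) y = delta c y + delta c' y"
  shows "delta \<in> hom (cochain_grp A) (cochain_grp B)"
proof (rule homI)
  fix c c' assume c: "c \<in> carrier (cochain_grp A)" and c': "c' \<in> carrier (cochain_grp A)"
  have sum: "(\<lambda>a\<in>A. c a + c' a) \<in> carrier (cochain_grp A)" by (simp add: cochain_carrier)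
  show "delta (c \<otimes>\<^bsub>cochain_grp A\<^esub> c') = delta c \<otimes>\<^bsub>cochain_grp B\<^esub> delta c'"
    unfolding cochain_mult
  proof (rule cochain_eqI[OF closed[OF sum]])
    show "(\<lambda>y\<in>B. delta c y + delta c' y) \<in> carrier (cochain_grp B)"
      by (simp add: cochain_carrier)
  qed (simp add: c c' additive)
qed (rule closed)

definition cocycle_grp :: "'x set \<Rightarrow> 'x set \<Rightarrow> (('x \<Rightarrow> int) \<Rightarrow> ('x \<Rightarrow> int)) \<Rightarrow> ('x \<Rightarrow> int) monoid" where
  "cocycle_grp A B delta =
     (cochain_grp A)\<lparr>carrier := {c \<in> carrier (cochain_grp A). delta c = \<one>\<^bsub>cochain_grp B\<^esub>}\<rparr>"

lemma cohom_grp_cocycle_grp: "cohom_grp A B delta Bd = cocycle_grp A B delta Mod Bd"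
  by (simp add: cohom_grp_def cocycle_grp_def)

lemma cocycle_grp_carrier:
  "carrier (cocycle_grp A B delta) = {c \<in> carrier (cochain_grp A). delta c = \<one>\<^bsub>cochain_grp B\<^esub>}"
  by (simp add: cocycle_grp_def)

lemma cocycle_grp_mult: "x \<otimes>\<^bsub>cocycle_grp A B delta\<^esub> y = x \<otimes>\<^bsub>cochain_grp A\<^esub> y"
  by (simp add: cocycle_grp_def)

lemma cocycle_grp_subgroup:
  assumes "delta \<in> hom (cochain_grp A) (cochain_grp B)"
  shows "subgroup (carrier (cocycle_grp A B delta)) (cochain_grp A)"
proof -
  interpret group_hom "cochain_grp A" "cochain_grp B" delta
    using assms by (simp add: group_hom_def group_hom_axioms_def cochain_group)
  show ?thesis
    using subgroup_kernel by (simp add: cocycle_grp_carrier kernel_def)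
qed

lemma cocycle_grp_comm_group:
  assumes "delta \<in> hom (cochain_grp A) (cochain_grp B)"
  shows "comm_group (cocycle_grp A B delta)"
proof -
  interpret C: comm_group "cochain_grp A" by (rule cochain_comm_group)
  note sub = cocycle_grp_subgroup[OF assms]
  have "group (cocycle_grp A B delta)"
    using C.subgroup_imp_group[OF sub] by (simp add: cocycle_grp_def)
  then show ?thesis
    by (rule group.group_comm_groupI)
      (simp add: cocycle_grp_def, metis C.m_comm sub subgroup.mem_carrier)
qed

lemma coboundary_subgroup:
  assumes delta: "delta \<in> hom (cochain_grp A) (cochain_grp B)"
    and delta': "delta' \<in> hom (cochain_grp A') (cochain_grp A)"
    and square_zero: "\<And>c. c \<in> carrier (cochain_grp A') \<Longrightarrow> delta (delta' c) = \<one>\<^bsub>cochain_grp B\<^esub>"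
  shows "subgroup (delta' ` carrier (cochain_grp A')) (cocycle_grp A B delta)"
proof -
  interpret C: comm_group "cochain_grp A" by (rule cochain_comm_group)
  interpret h: group_hom "cochain_grp A'" "cochain_grp A" delta'
    using delta' by (simp add: group_hom_def group_hom_axioms_def cochain_group)
  have "delta' ` carrier (cochain_grp A') \<subseteq> carrier (cocycle_grp A B delta)"
    using square_zero delta' by (auto simp: cocycle_grp_carrier hom_def)
  from C.subgroup_incl[OF h.img_is_subgroup cocycle_grp_subgroup[OF delta] this]
  show ?thesis by (simp add: cocycle_grp_def)
qed

lemma coset_image_onto:
  assumes ZG: "comm_group ZG" and BG: "subgroup BG ZG"
    and phi: "phi \<in> hom ZQ ZG"
    and onto: "\<And>c. c \<in> carrier ZG \<Longrightarrow> \<exists>f\<in>carrier ZQ. \<exists>b\<in>BG. c = phi f \<otimes>\<^bsub>ZG\<^esub> b"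
  shows "(\<lambda>f. BG #>\<^bsub>ZG\<^esub> phi f) ` carrier ZQ = carrier (ZG Mod BG)"
proof
  interpret ZG: comm_group ZG by (rule ZG)
  interpret BG: subgroup BG ZG by (rule BG)
  have phi_closed: "phi f \<in> carrier ZG" if "f \<in> carrier ZQ" for f
    using phi that by (auto simp: hom_def)
  show "(\<lambda>f. BG #>\<^bsub>ZG\<^esub> phi f) ` carrier ZQ \<subseteq> carrier (ZG Mod BG)"
    using phi_closed by (auto simp: FactGroup_def RCOSETS_def)
  show "carrier (ZG Mod BG) \<subseteq> (\<lambda>f. BG #>\<^bsub>ZG\<^esub> phi f) ` carrier ZQ"
  proof
    fix X assume "X \<in> carrier (ZG Mod BG)"
    then obtain c where c: "c \<in> carrier ZG" "X = BG #>\<^bsub>ZG\<^esub> c"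
      by (auto simp: FactGroup_def RCOSETS_def)
    then obtain f b where f: "f \<in> carrier ZQ" and b: "b \<in> BG" and cfb: "c = phi f \<otimes>\<^bsub>ZG\<^esub> b"
      using onto by blast
    have bZ: "b \<in> carrier ZG" using b BG.subset by auto
    have "X = (BG #>\<^bsub>ZG\<^esub> b) #>\<^bsub>ZG\<^esub> phi f"
      using c(2) cfb ZG.m_comm[OF phi_closed[OF f] bZ]
        ZG.coset_mult_assoc[OF BG.subset bZ phi_closed[OF f]] by simp
    also have "\<dots> = BG #>\<^bsub>ZG\<^esub> phi f" using BG.rcos_const[OF ZG.is_group b] by simp
    finally show "X \<in> (\<lambda>f. BG #>\<^bsub>ZG\<^esub> phi f) ` carrier ZQ" using f by blast
  qed
qed

lemma coset_image_kernel:
  assumes ZG: "comm_group ZG" and BG: "subgroup BG ZG" and BQ: "BQ \<subseteq> carrier ZQ"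
    and phi: "phi \<in> hom ZQ ZG"
    and reflect: "\<And>f. f \<in> carrier ZQ \<Longrightarrow> phi f \<in> BG \<longleftrightarrow> f \<in> BQ"
  shows "kernel ZQ (ZG Mod BG) (\<lambda>f. BG #>\<^bsub>ZG\<^esub> phi f) = BQ"
proof -
  interpret ZG: comm_group ZG by (rule ZG)
  have "BG #>\<^bsub>ZG\<^esub> phi f = BG \<longleftrightarrow> f \<in> BQ" if f: "f \<in> carrier ZQ" for f
  proof -
    have "phi f \<in> carrier ZG" using phi f by (auto simp: hom_def)
    then have "BG #>\<^bsub>ZG\<^esub> phi f = BG \<longleftrightarrow> phi f \<in> BG"
      using subgroup.rcos_const[OF BG ZG.is_group] ZG.rcos_self[OF _ BG] by blast
    then show ?thesis using reflect[OF f] by simp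
  qed
  then show ?thesis using BQ by (auto simp: kernel_def FactGroup_def)
qed

lemma quotient_iso_from_cocycle_map:
  assumes ZQ: "comm_group ZQ" and ZG: "comm_group ZG"
    and BQ: "subgroup BQ ZQ" and BG: "subgroup BG ZG"
    and phi: "phi \<in> hom ZQ ZG"
    and onto: "\<And>c. c \<in> carrier ZG \<Longrightarrow> \<exists>f\<in>carrier ZQ. \<exists>b\<in>BG. c = phi f \<otimes>\<^bsub>ZG\<^esub> b"
    and reflect: "\<And>f. f \<in> carrier ZQ \<Longrightarrow> phi f \<in> BG \<longleftrightarrow> f \<in> BQ"
  shows "ZG Mod BG \<cong> ZQ Mod BQ"
proof -
  interpret ZQ: comm_group ZQ by (rule ZQ)
  interpret BG: normal BG ZG by (rule comm_group.subgroup_imp_normal[OF ZG BG])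
  have "(\<lambda>f. BG #>\<^bsub>ZG\<^esub> phi f) \<in> hom ZQ (ZG Mod BG)"
    using hom_compose[OF phi BG.r_coset_hom_Mod] by (simp add: comp_def)
  then interpret h: group_hom ZQ "ZG Mod BG" "\<lambda>f. BG #>\<^bsub>ZG\<^esub> phi f"
    using BG.factorgroup_is_group by (simp add: group_hom_def group_hom_axioms_def ZQ.group_axioms)
  have "ZQ Mod BQ \<cong> ZG Mod BG"
    using h.FactGroup_iso[OF coset_image_onto[OF ZG BG phi onto]]
      coset_image_kernel[OF ZG BG subgroup.subset[OF BQ] phi reflect] by simp
  then show ?thesis
    using group.iso_sym normal.factorgroup_is_group[OF ZQ.subgroup_imp_normal[OF BQ]] by blast
qed

locale simplicial =
  fixes G :: "nat \<Rightarrow> 'a monoid" and d :: "nat \<Rightarrow> nat \<Rightarrow> 'a \<Rightarrow> 'a" and s :: "nat \<Rightarrow> nat \<Rightarrow> 'a \<Rightarrow> 'a"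
  assumes simplicial_group: "simplicial_group G d s"
begin

abbreviation "e0 \<equiv> \<one>\<^bsub>G 0\<^esub>"
abbreviation "e1 \<equiv> \<one>\<^bsub>G 1\<^esub>"
abbreviation "e2 \<equiv> \<one>\<^bsub>G 2\<^esub>"

lemma group_G: "group (G n)"
  using simplicial_group by (simp add: simplicial_group_def)

lemma G0: "group (G 0)" and G1: "group (G 1)"
  by (rule group_G)+

lemma face_hom: "1 \<le> n \<Longrightarrow> i \<le> n \<Longrightarrow> group_hom (G n) (G (n - 1)) (d n i)"
  using simplicial_group group_G by (simp add: simplicial_group_def group_hom_def group_hom_axioms_def)

lemma degeneracy_hom: "j \<le> n \<Longrightarrow> group_hom (G n) (G (Suc n)) (s n j)"
  using simplicial_group group_G by (simp add: simplicial_group_def group_hom_def group_hom_axioms_def)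

lemma face_face: "2 \<le> n \<Longrightarrow> i < j \<Longrightarrow> j \<le> n \<Longrightarrow> x \<in> carrier (G n) \<Longrightarrow>
    d (n - 1) i (d n j x) = d (n - 1) (j - 1) (d n i x)"
  using simplicial_group by (simp add: simplicial_group_def)

lemma face_degeneracy_below: "i < j \<Longrightarrow> j \<le> n \<Longrightarrow> x \<in> carrier (G n) \<Longrightarrow>
    d (Suc n) i (s n j x) = s (n - 1) (j - 1) (d n i x)"
  using simplicial_group by (simp add: simplicial_group_def)

lemma face_degeneracy_id: "j \<le> n \<Longrightarrow> i = j \<or> i = Suc j \<Longrightarrow> x \<in> carrier (G n) \<Longrightarrow>
    d (Suc n) i (s n j x) = x"
  using simplicial_group by (simp add: simplicial_group_def)

lemma face_degeneracy_above: "Suc j < i \<Longrightarrow> i \<le> Suc n \<Longrightarrow> j \<le> n \<Longrightarrow> x \<in> carrier (G n) \<Longrightarrow>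
    d (Suc n) i (s n j x) = s (n - 1) j (d n (i - 1) x)"
  using simplicial_group by (simp add: simplicial_group_def)

lemma d10_hom: "group_hom (G 1) (G 0) (d 1 0)" using face_hom[of 1 0] by simp
lemma d11_hom: "group_hom (G 1) (G 0) (d 1 1)" using face_hom[of 1 1] by simp
lemma d20_hom: "group_hom (G 2) (G 1) (d 2 0)" using face_hom[of 2 0] by simp
lemma d21_hom: "group_hom (G 2) (G 1) (d 2 1)" using face_hom[of 2 1] by simp
lemma d22_hom: "group_hom (G 2) (G 1) (d 2 2)" using face_hom[of 2 2] by simp
lemma s00_hom: "group_hom (G 0) (G 1) (s 0 0)" using degeneracy_hom[of 0 0] by simp
lemma s10_hom: "group_hom (G 1) (G 2) (s 1 0)"
  using degeneracy_hom[of 0 1] by (simp add: numeral_2_eq_2)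
lemma s11_hom: "group_hom (G 1) (G 2) (s 1 1)"
  using degeneracy_hom[of 1 1] by (simp add: numeral_2_eq_2)

lemma face_face_low[simp]:
  "x \<in> carrier (G 2) \<Longrightarrow> d 1 0 (d 2 1 x) = d 1 0 (d 2 0 x)"
  "x \<in> carrier (G 2) \<Longrightarrow> d 1 0 (d 2 2 x) = d 1 1 (d 2 0 x)"
  "x \<in> carrier (G 2) \<Longrightarrow> d 1 1 (d 2 2 x) = d 1 1 (d 2 1 x)"
  using face_face[of 2 0 1 x] face_face[of 2 0 2 x] face_face[of 2 1 2 x] by simp_all

lemma face_degeneracy_low[simp]:
  "g \<in> carrier (G 0) \<Longrightarrow> d 1 0 (s 0 0 g) = g"
  "g \<in> carrier (G 0) \<Longrightarrow> d 1 1 (s 0 0 g) = g"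
  "y \<in> carrier (G 1) \<Longrightarrow> d 2 0 (s 1 0 y) = y"
  "y \<in> carrier (G 1) \<Longrightarrow> d 2 1 (s 1 0 y) = y"
  "y \<in> carrier (G 1) \<Longrightarrow> d 2 2 (s 1 0 y) = s 0 0 (d 1 1 y)"
  "y \<in> carrier (G 1) \<Longrightarrow> d 2 0 (s 1 1 y) = s 0 0 (d 1 0 y)"
  "y \<in> carrier (G 1) \<Longrightarrow> d 2 1 (s 1 1 y) = y"
  "y \<in> carrier (G 1) \<Longrightarrow> d 2 2 (s 1 1 y) = y"
  using face_degeneracy_id[where n=0 and i=0 and j=0 and x=g]
    face_degeneracy_id[where n=0 and i=1 and j=0 and x=g]
    face_degeneracy_id[where n=1 and i=0 and j=0 and x=y]
    face_degeneracy_id[where n=1 and i=1 and j=0 and x=y]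
    face_degeneracy_above[where n=1 and i=2 and j=0 and x=y]
    face_degeneracy_below[where n=1 and i=0 and j=1 and x=y]
    face_degeneracy_id[where n=1 and i=1 and j=1 and x=y]
    face_degeneracy_id[where n=1 and i=2 and j=1 and x=y]
  by (simp_all add: numeral_2_eq_2)

lemma low_closed[simp]:
  "x \<in> carrier (G 1) \<Longrightarrow> d 1 0 x \<in> carrier (G 0)"
  "x \<in> carrier (G 1) \<Longrightarrow> d 1 1 x \<in> carrier (G 0)"
  "y \<in> carrier (G 2) \<Longrightarrow> d 2 0 y \<in> carrier (G 1)"
  "y \<in> carrier (G 2) \<Longrightarrow> d 2 1 y \<in> carrier (G 1)"
  "y \<in> carrier (G 2) \<Longrightarrow> d 2 2 y \<in> carrier (G 1)"
  "g \<in> carrier (G 0) \<Longrightarrow> s 0 0 g \<in> carrier (G 1)"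
  "x \<in> carrier (G 1) \<Longrightarrow> s 1 0 x \<in> carrier (G 2)"
  "x \<in> carrier (G 1) \<Longrightarrow> s 1 1 x \<in> carrier (G 2)"
  using group_hom.hom_closed[OF d10_hom] group_hom.hom_closed[OF d11_hom]
    group_hom.hom_closed[OF d20_hom] group_hom.hom_closed[OF d21_hom]
    group_hom.hom_closed[OF d22_hom] group_hom.hom_closed[OF s00_hom]
    group_hom.hom_closed[OF s10_hom] group_hom.hom_closed[OF s11_hom] by auto

lemma low_mult[simp]:
  "x \<in> carrier (G 1) \<Longrightarrow> y \<in> carrier (G 1) \<Longrightarrow> d 1 0 (x \<otimes>\<^bsub>G 1\<^esub> y) = d 1 0 x \<otimes>\<^bsub>G 0\<^esub> d 1 0 y"
  "x \<in> carrier (G 1) \<Longrightarrow> y \<in> carrier (G 1) \<Longrightarrow> d 1 1 (x \<otimes>\<^bsub>G 1\<^esub> y) = d 1 1 x \<otimes>\<^bsub>G 0\<^esub> d 1 1 y"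
  "u \<in> carrier (G 2) \<Longrightarrow> v \<in> carrier (G 2) \<Longrightarrow> d 2 0 (u \<otimes>\<^bsub>G 2\<^esub> v) = d 2 0 u \<otimes>\<^bsub>G 1\<^esub> d 2 0 v"
  "u \<in> carrier (G 2) \<Longrightarrow> v \<in> carrier (G 2) \<Longrightarrow> d 2 1 (u \<otimes>\<^bsub>G 2\<^esub> v) = d 2 1 u \<otimes>\<^bsub>G 1\<^esub> d 2 1 v"
  "u \<in> carrier (G 2) \<Longrightarrow> v \<in> carrier (G 2) \<Longrightarrow> d 2 2 (u \<otimes>\<^bsub>G 2\<^esub> v) = d 2 2 u \<otimes>\<^bsub>G 1\<^esub> d 2 2 v"
  "g \<in> carrier (G 0) \<Longrightarrow> h \<in> carrier (G 0) \<Longrightarrow> s 0 0 (g \<otimes>\<^bsub>G 0\<^esub> h) = s 0 0 g \<otimes>\<^bsub>G 1\<^esub> s 0 0 h"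
  "x \<in> carrier (G 1) \<Longrightarrow> y \<in> carrier (G 1) \<Longrightarrow> s 1 0 (x \<otimes>\<^bsub>G 1\<^esub> y) = s 1 0 x \<otimes>\<^bsub>G 2\<^esub> s 1 0 y"
  "x \<in> carrier (G 1) \<Longrightarrow> y \<in> carrier (G 1) \<Longrightarrow> s 1 1 (x \<otimes>\<^bsub>G 1\<^esub> y) = s 1 1 x \<otimes>\<^bsub>G 2\<^esub> s 1 1 y"
  using group_hom.hom_mult[OF d10_hom] group_hom.hom_mult[OF d11_hom]
    group_hom.hom_mult[OF d20_hom] group_hom.hom_mult[OF d21_hom]
    group_hom.hom_mult[OF d22_hom] group_hom.hom_mult[OF s00_hom]
    group_hom.hom_mult[OF s10_hom] group_hom.hom_mult[OF s11_hom] by auto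

lemma low_one[simp]:
  "d 1 0 \<one>\<^bsub>G 1\<^esub> = \<one>\<^bsub>G 0\<^esub>" "d 1 1 \<one>\<^bsub>G 1\<^esub> = \<one>\<^bsub>G 0\<^esub>"
  "d 2 0 \<one>\<^bsub>G 2\<^esub> = \<one>\<^bsub>G 1\<^esub>" "d 2 1 \<one>\<^bsub>G 2\<^esub> = \<one>\<^bsub>G 1\<^esub>" "d 2 2 \<one>\<^bsub>G 2\<^esub> = \<one>\<^bsub>G 1\<^esub>"
  "s 0 0 \<one>\<^bsub>G 0\<^esub> = \<one>\<^bsub>G 1\<^esub>" "s 1 0 \<one>\<^bsub>G 1\<^esub> = \<one>\<^bsub>G 2\<^esub>" "s 1 1 \<one>\<^bsub>G 1\<^esub> = \<one>\<^bsub>G 2\<^esub>"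
  using group_hom.hom_one[OF d10_hom] group_hom.hom_one[OF d11_hom]
    group_hom.hom_one[OF d20_hom] group_hom.hom_one[OF d21_hom]
    group_hom.hom_one[OF d22_hom] group_hom.hom_one[OF s00_hom]
    group_hom.hom_one[OF s10_hom] group_hom.hom_one[OF s11_hom] by auto

lemma low_inv[simp]:
  "x \<in> carrier (G 1) \<Longrightarrow> d 1 0 (inv\<^bsub>G 1\<^esub> x) = inv\<^bsub>G 0\<^esub> (d 1 0 x)"
  "x \<in> carrier (G 1) \<Longrightarrow> d 1 1 (inv\<^bsub>G 1\<^esub> x) = inv\<^bsub>G 0\<^esub> (d 1 1 x)"
  "g \<in> carrier (G 0) \<Longrightarrow> s 0 0 (inv\<^bsub>G 0\<^esub> g) = inv\<^bsub>G 1\<^esub> (s 0 0 g)"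
  using group_hom.hom_inv[OF d10_hom] group_hom.hom_inv[OF d11_hom]
    group_hom.hom_inv[OF s00_hom] by auto

lemma group_simps[simp]:
  "x \<in> carrier (G n) \<Longrightarrow> y \<in> carrier (G n) \<Longrightarrow> x \<otimes>\<^bsub>G n\<^esub> y \<in> carrier (G n)"
  "x \<in> carrier (G n) \<Longrightarrow> inv\<^bsub>G n\<^esub> x \<in> carrier (G n)"
  "\<one>\<^bsub>G n\<^esub> \<in> carrier (G n)"
  "x \<in> carrier (G n) \<Longrightarrow> \<one>\<^bsub>G n\<^esub> \<otimes>\<^bsub>G n\<^esub> x = x"
  "x \<in> carrier (G n) \<Longrightarrow> x \<otimes>\<^bsub>G n\<^esub> \<one>\<^bsub>G n\<^esub> = x"
  using group_G[of n] by (simp_all add: group.is_monoid monoid.m_closed group.inv_closed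
      monoid.one_closed monoid.l_one monoid.r_one)

end

(* Keep the numeral 1 in indices such as d 1 0, so that the rules above stay applicable. *)
declare One_nat_def[simp del]

context simplicial
begin

(* N_1 G = ker d_1 is a subgroup, and B_0 NG = d_0(N_1 G) is a normal subgroup of G_0;
   conjugating by s_0 x shows normality. *)
lemma N1_sub: "subgroup (N1 G d) (G 1)"
proof -
  have "N1 G d = kernel (G 1) (G 0) (d 1 1)" by (simp add: N1_def kernel_def)
  then show ?thesis using group_hom.subgroup_kernel[OF d11_hom] by simp
qed

lemma N1I: "x \<in> carrier (G 1) \<Longrightarrow> d 1 1 x = \<one>\<^bsub>G 0\<^esub> \<Longrightarrow> x \<in> N1 G d"
  by (simp add: N1_def)

lemma N1D: "x \<in> N1 G d \<Longrightarrow> x \<in> carrier (G 1)" "x \<in> N1 G d \<Longrightarrow> d 1 1 x = \<one>\<^bsub>G 0\<^esub>"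
  by (simp_all add: N1_def)

lemma B0_sub: "subgroup (B0 G d) (G 0)"
  unfolding B0_def by (rule group_hom.subgroup_img_is_subgroup[OF d10_hom N1_sub])

lemma B0_normal: "B0 G d \<lhd> G 0"
proof -
  interpret G0: group "G 0" by (rule G0)
  have "x \<otimes>\<^bsub>G 0\<^esub> h \<otimes>\<^bsub>G 0\<^esub> inv\<^bsub>G 0\<^esub> x \<in> B0 G d"
    if x: "x \<in> carrier (G 0)" and h: "h \<in> B0 G d" for x h
  proof -
    obtain n where n: "n \<in> N1 G d" "h = d 1 0 n" using h unfolding B0_def by auto
    let ?m = "s 0 0 x \<otimes>\<^bsub>G 1\<^esub> n \<otimes>\<^bsub>G 1\<^esub> inv\<^bsub>G 1\<^esub> (s 0 0 x)"
    have nc: "n \<in> carrier (G 1)" using N1D[OF n(1)] by simp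
    have "?m \<in> N1 G d"
      using x nc N1D[OF n(1)] by (intro N1I) simp_all
    moreover have "d 1 0 ?m = x \<otimes>\<^bsub>G 0\<^esub> h \<otimes>\<^bsub>G 0\<^esub> inv\<^bsub>G 0\<^esub> x"
      using x nc n(2) by simp
    ultimately show ?thesis unfolding B0_def by (metis image_eqI)
  qed
  then show ?thesis using G0.normal_inv_iff B0_sub by blast
qed

lemma pi0_group: "group (pi0 G d)"
  unfolding pi0_def by (rule normal.factorgroup_is_group[OF B0_normal])

abbreviation Q where "Q \<equiv> pi0 G d"

definition cls :: "'a \<Rightarrow> 'a set" where "cls g = B0 G d #>\<^bsub>G 0\<^esub> g"

lemma cls_hom: "cls \<in> hom (G 0) Q"
  using normal.r_coset_hom_Mod[OF B0_normal] unfolding pi0_def cls_def[abs_def] by simp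

lemma cls_closed[simp]: "g \<in> carrier (G 0) \<Longrightarrow> cls g \<in> carrier Q"
  using cls_hom by (auto simp: hom_def)

lemma cls_mult: "g \<in> carrier (G 0) \<Longrightarrow> h \<in> carrier (G 0) \<Longrightarrow> cls (g \<otimes>\<^bsub>G 0\<^esub> h) = cls g \<otimes>\<^bsub>Q\<^esub> cls h"
  using cls_hom by (auto simp: hom_def)

lemma pi0_carrier: "carrier Q = cls ` carrier (G 0)"
  by (auto simp: pi0_def FactGroup_def RCOSETS_def cls_def)

lemma cls_eqI: "k \<in> B0 G d \<Longrightarrow> h \<in> carrier (G 0) \<Longrightarrow> cls (k \<otimes>\<^bsub>G 0\<^esub> h) = cls h"
proof -
  assume k: "k \<in> B0 G d" and h: "h \<in> carrier (G 0)"
  interpret G0: group "G 0" by (rule G0)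
  have "k \<otimes>\<^bsub>G 0\<^esub> h \<in> B0 G d #>\<^bsub>G 0\<^esub> h" using k h unfolding r_coset_def by auto
  then show ?thesis unfolding cls_def using G0.repr_independence[OF _ h B0_sub] by simp
qed

lemma cls_eqD:
  assumes g: "g \<in> carrier (G 0)" and h: "h \<in> carrier (G 0)" and e: "cls g = cls h"
  shows "\<exists>k\<in>B0 G d. g = k \<otimes>\<^bsub>G 0\<^esub> h"
proof -
  interpret G0: group "G 0" by (rule G0)
  have "g \<in> cls h" using e G0.rcos_self[OF g B0_sub] unfolding cls_def by simp
  then show ?thesis unfolding cls_def r_coset_def by auto
qed

lemma cls_eq_faces:
  assumes g: "g \<in> carrier (G 0)" and h: "h \<in> carrier (G 0)" and e: "cls g = cls h"
  shows "\<exists>y\<in>carrier (G 1). d 1 0 y = g \<and> d 1 1 y = h"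
proof -
  obtain k where k: "k \<in> B0 G d" "g = k \<otimes>\<^bsub>G 0\<^esub> h" using cls_eqD[OF g h e] by blast
  then obtain n where n: "n \<in> N1 G d" "k = d 1 0 n" unfolding B0_def by auto
  have nc: "n \<in> carrier (G 1)" using N1D[OF n(1)] by simp
  show ?thesis
    by (rule bexI[of _ "n \<otimes>\<^bsub>G 1\<^esub> s 0 0 h"]) (use nc h n k N1D[OF n(1)] in simp_all)
qed

lemma G1_decompose:
  assumes x: "x \<in> carrier (G 1)"
  obtains n where "n \<in> N1 G d" "x = n \<otimes>\<^bsub>G 1\<^esub> s 0 0 (d 1 1 x)"
proof
  interpret G0: group "G 0" by (rule G0)
  interpret G1: group "G 1" by (rule G1)
  show "x \<otimes>\<^bsub>G 1\<^esub> inv\<^bsub>G 1\<^esub> (s 0 0 (d 1 1 x)) \<in> N1 G d"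
    using x by (intro N1I) simp_all
  show "x = x \<otimes>\<^bsub>G 1\<^esub> inv\<^bsub>G 1\<^esub> (s 0 0 (d 1 1 x)) \<otimes>\<^bsub>G 1\<^esub> s 0 0 (d 1 1 x)"
    using x by (simp add: G1.m_assoc)
qed

lemma cls_faces[simp]:
  assumes x: "x \<in> carrier (G 1)" shows "cls (d 1 1 x) = cls (d 1 0 x)"
proof -
  obtain n where n: "n \<in> N1 G d" and xn: "x = n \<otimes>\<^bsub>G 1\<^esub> s 0 0 (d 1 1 x)"
    using G1_decompose[OF x] by blast
  have "d 1 0 x = d 1 0 n \<otimes>\<^bsub>G 0\<^esub> d 1 1 x"
    using x N1D[OF n] by (subst xn) simp
  moreover have "d 1 0 n \<in> B0 G d" using n unfolding B0_def by auto
  ultimately show ?thesis using cls_eqI[of "d 1 0 n" "d 1 1 x"] x by simp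
qed

definition lift :: "'a set \<Rightarrow> 'a" where "lift X = (SOME g. g \<in> carrier (G 0) \<and> cls g = X)"

lemma lift_spec: "X \<in> carrier Q \<Longrightarrow> lift X \<in> carrier (G 0) \<and> cls (lift X) = X"
  unfolding lift_def pi0_carrier by (rule someI_ex) auto

lemma lift_closed[simp]: "X \<in> carrier Q \<Longrightarrow> lift X \<in> carrier (G 0)"
  and cls_lift[simp]: "X \<in> carrier Q \<Longrightarrow> cls (lift X) = X"
  using lift_spec by blast+

definition canon :: "'a \<Rightarrow> 'a" where "canon g = lift (cls g)"

lemma canon_closed: "g \<in> carrier (G 0) \<Longrightarrow> canon g \<in> carrier (G 0)"
  and cls_canon: "g \<in> carrier (G 0) \<Longrightarrow> cls (canon g) = cls g"
  by (simp_all add: canon_def)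

lemma canon_B0:
  assumes g: "g \<in> carrier (G 0)" shows "g \<otimes>\<^bsub>G 0\<^esub> inv\<^bsub>G 0\<^esub> (canon g) \<in> B0 G d"
proof -
  interpret G0: group "G 0" by (rule G0)
  interpret B: subgroup "B0 G d" "G 0" by (rule B0_sub)
  obtain k where k: "k \<in> B0 G d" "canon g = k \<otimes>\<^bsub>G 0\<^esub> g"
    using cls_eqD[of "canon g" g] canon_closed[OF g] cls_canon[OF g] g by auto
  have "k \<in> carrier (G 0)" using k(1) B.subset by auto
  then have "g \<otimes>\<^bsub>G 0\<^esub> inv\<^bsub>G 0\<^esub> (canon g) = inv\<^bsub>G 0\<^esub> k"
    using g k(2) by (simp add: G0.inv_mult_group G0.m_assoc[symmetric])
  then show ?thesis using k(1) by simp
qed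

definition nu :: "'a \<Rightarrow> 'a" where
  "nu g = (SOME n. n \<in> N1 G d \<and> d 1 0 n = g \<otimes>\<^bsub>G 0\<^esub> inv\<^bsub>G 0\<^esub> (canon g))"

lemma nu_spec: "g \<in> carrier (G 0) \<Longrightarrow>
    nu g \<in> N1 G d \<and> d 1 0 (nu g) = g \<otimes>\<^bsub>G 0\<^esub> inv\<^bsub>G 0\<^esub> (canon g)"
proof -
  assume g: "g \<in> carrier (G 0)"
  have "g \<otimes>\<^bsub>G 0\<^esub> inv\<^bsub>G 0\<^esub> (canon g) \<in> d 1 0 ` N1 G d" using canon_B0[OF g] by (simp add: B0_def)
  then have "\<exists>n. n \<in> N1 G d \<and> d 1 0 n = g \<otimes>\<^bsub>G 0\<^esub> inv\<^bsub>G 0\<^esub> (canon g)" by (metis imageE)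
  then show ?thesis unfolding nu_def by (rule someI_ex)
qed

definition Z1 :: "'a set" where "Z1 = {g \<in> N1 G d. d 1 0 g = \<one>\<^bsub>G 0\<^esub>}"

lemma Z1D: "z \<in> Z1 \<Longrightarrow> z \<in> carrier (G 1)" "z \<in> Z1 \<Longrightarrow> d 1 0 z = \<one>\<^bsub>G 0\<^esub>"
  "z \<in> Z1 \<Longrightarrow> d 1 1 z = \<one>\<^bsub>G 0\<^esub>"
  by (auto simp: Z1_def N1_def)

lemma Z1_pow: assumes z: "z \<in> Z1" shows "z [^]\<^bsub>G 1\<^esub> (j::nat) \<in> Z1"
proof -
  interpret G0: group "G 0" by (rule G0)
  have "d 1 0 (z [^]\<^bsub>G 1\<^esub> j) = \<one>\<^bsub>G 0\<^esub>" "d 1 1 (z [^]\<^bsub>G 1\<^esub> j) = \<one>\<^bsub>G 0\<^esub>"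
    using group_hom.hom_nat_pow[OF d10_hom, of z j] group_hom.hom_nat_pow[OF d11_hom, of z j]
      Z1D[OF z] by simp_all
  moreover have "z [^]\<^bsub>G 1\<^esub> j \<in> carrier (G 1)"
    using Z1D[OF z] G1 by (simp add: group.is_monoid monoid.nat_pow_closed)
  ultimately show ?thesis by (simp add: Z1_def N1_def)
qed

lemma B1_sub_carrier: "B1 G d \<subseteq> carrier (G 1)"
  by (auto simp: B1_def N2_def)

lemma one_B1: "\<one>\<^bsub>G 1\<^esub> \<in> B1 G d"
proof -
  have "\<one>\<^bsub>G 2\<^esub> \<in> N2 G d" by (simp add: N2_def)
  then show ?thesis unfolding B1_def by (metis low_one(3) image_eqI)
qed

lemma finite_pi1_torsion:
  assumes fin: "finite (carrier (pi1 G d))" and z: "z \<in> Z1"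
  shows "\<exists>j>0. z [^]\<^bsub>G 1\<^esub> (j::nat) \<in> B1 G d"
proof -
  interpret G1: group "G 1" by (rule G1)
  have zc: "z \<in> carrier (G 1)" using Z1D[OF z] by simp
  define F where "F j = B1 G d #>\<^bsub>G 1\<^esub> (z [^]\<^bsub>G 1\<^esub> (j::nat))" for j
  have "F j \<in> carrier (pi1 G d)" for j
  proof -
    have "z [^]\<^bsub>G 1\<^esub> j \<in> Z1" by (rule Z1_pow[OF z])
    then show ?thesis unfolding pi1_def FactGroup_def RCOSETS_def F_def Z1_def r_coset_def by auto
  qed
  then have "range F \<subseteq> carrier (pi1 G d)" by auto
  then have "finite (range F)" using fin finite_subset by blast
  then have "\<not> inj F" using finite_imageD infinite_UNIV_nat by blast
  then obtain i j where ij: "i \<noteq> j" "F i = F j" unfolding inj_def by blast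
  have power_in_B1: "\<exists>j>0. z [^]\<^bsub>G 1\<^esub> (j::nat) \<in> B1 G d" if lt: "i < j" and e: "F i = F j" for i j
  proof -
    have "z [^]\<^bsub>G 1\<^esub> j = \<one>\<^bsub>G 1\<^esub> \<otimes>\<^bsub>G 1\<^esub> z [^]\<^bsub>G 1\<^esub> j"
      using zc by simp
    then have "z [^]\<^bsub>G 1\<^esub> j \<in> F j" unfolding F_def r_coset_def using one_B1 by blast
    then have "z [^]\<^bsub>G 1\<^esub> j \<in> F i" using e by simp
    then obtain b where b: "b \<in> B1 G d" "z [^]\<^bsub>G 1\<^esub> j = b \<otimes>\<^bsub>G 1\<^esub> z [^]\<^bsub>G 1\<^esub> i"
      unfolding F_def r_coset_def by auto
    have bc: "b \<in> carrier (G 1)" using b(1) B1_sub_carrier by auto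
    have "z [^]\<^bsub>G 1\<^esub> (j - i) \<otimes>\<^bsub>G 1\<^esub> z [^]\<^bsub>G 1\<^esub> i = z [^]\<^bsub>G 1\<^esub> j"
      using G1.nat_pow_mult[OF zc, of "j - i" i] lt by simp
    then have "z [^]\<^bsub>G 1\<^esub> (j - i) = b"
      using b bc zc G1.right_cancel[of "z [^]\<^bsub>G 1\<^esub> (j - i)" "z [^]\<^bsub>G 1\<^esub> i" b] G1.nat_pow_closed
      by simp
    then show ?thesis using b(1) lt by (intro exI[of _ "j - i"]) simp
  qed
  show ?thesis using ij power_in_B1 by (cases "i < j") (auto simp: not_less_iff_gr_or_eq)
qed

end

lemma gX1: "[a] \<in> gX H 1 \<longleftrightarrow> a \<in> carrier H"
  by (simp add: gX_def)

lemma gX2: "[a, b] \<in> gX H 2 \<longleftrightarrow> a \<in> carrier H \<and> b \<in> carrier H"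
  by (simp add: gX_def)

lemma gX3: "[a, b, e] \<in> gX H 3 \<longleftrightarrow> a \<in> carrier H \<and> b \<in> carrier H \<and> e \<in> carrier H"
  by (simp add: gX_def)

lemma gX2E:
  assumes "xs \<in> gX H 2" obtains a b where "xs = [a, b]" "a \<in> carrier H" "b \<in> carrier H"
  using assms by (cases xs; cases "tl xs") (auto simp: gX_def numeral_2_eq_2)

lemma gX3E:
  assumes "xs \<in> gX H 3"
  obtains a b e where "xs = [a, b, e]" "a \<in> carrier H" "b \<in> carrier H" "e \<in> carrier H"
  using assms by (cases xs; cases "tl xs"; cases "tl (tl xs)") (auto simp: gX_def numeral_3_eq_3)

lemma gdiff1_eq: "[a, b] \<in> gX H 2 \<Longrightarrow> gdiff H 1 f [a, b] = f [b] - f [a \<otimes>\<^bsub>H\<^esub> b] + f [a]"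
  by (simp add: gdiff_def numeral_eq_Suc upt_rec)

lemma gdiff2_eq: "[a, b, e] \<in> gX H 3 \<Longrightarrow>
    gdiff H 2 f [a, b, e] = f [b, e] - f [a \<otimes>\<^bsub>H\<^esub> b, e] + f [a, b \<otimes>\<^bsub>H\<^esub> e] - f [a, b]"
  by (simp add: gdiff_def numeral_eq_Suc upt_rec)

lemma gdiff_closed: "gdiff H n f \<in> carrier (cochain_grp (gX H (Suc n)))"
  by (simp add: cochain_carrier gdiff_def)

lemma gdiff1_closed: "gdiff H 1 f \<in> carrier (cochain_grp (gX H 2))"
  using gdiff_closed[of H 1] by (simp add: numeral_2_eq_2)

lemma gdiff2_closed: "gdiff H 2 f \<in> carrier (cochain_grp (gX H 3))"
  using gdiff_closed[of H 2] by (simp add: numeral_3_eq_3)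

lemma gdiff1_hom:
  assumes "group H" shows "gdiff H 1 \<in> hom (cochain_grp (gX H 1)) (cochain_grp (gX H 2))"
proof (rule cochain_homI[OF gdiff1_closed])
  fix c c' :: "'a list \<Rightarrow> int" and y assume "y \<in> gX H 2"
  then show "gdiff H 1 (\<lambda>a\<in>gX H 1. c a + c' a) y = gdiff H 1 c y + gdiff H 1 c' y"
    by (rule gX2E) (simp add: gdiff1_eq gX1 gX2 group.is_monoid[OF assms] monoid.m_closed)
qed

lemma gdiff2_hom:
  assumes "group H" shows "gdiff H 2 \<in> hom (cochain_grp (gX H 2)) (cochain_grp (gX H 3))"
proof (rule cochain_homI[OF gdiff2_closed])
  fix c c' :: "'a list \<Rightarrow> int" and y assume "y \<in> gX H 3"
  then show "gdiff H 2 (\<lambda>a\<in>gX H 2. c a + c' a) y = gdiff H 2 c y + gdiff H 2 c' y"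
    by (rule gX3E) (simp add: gdiff2_eq gX2 gX3 group.is_monoid[OF assms] monoid.m_closed)
qed

lemma gdiff_square_zero:
  assumes "group H" shows "gdiff H 2 (gdiff H 1 f) = \<one>\<^bsub>cochain_grp (gX H 3)\<^esub>"
proof (rule cochain_eqI)
  interpret H: group H by (rule assms)
  show "gdiff H 2 (gdiff H 1 f) y = \<one>\<^bsub>cochain_grp (gX H 3)\<^esub> y" if "y \<in> gX H 3" for y
    using that by (rule gX3E) (simp add: gdiff2_eq gdiff1_eq cochain_one gX2 gX3 H.m_assoc)
qed (simp_all add: gdiff2_closed cochain_one_closed)

context simplicial
begin

lemma sX1: "[g] \<in> sX G 1 \<longleftrightarrow> g \<in> carrier (G 0)"
  by (simp add: sX_def)

lemma sX2: "[x, g] \<in> sX G 2 \<longleftrightarrow> x \<in> carrier (G 1) \<and> g \<in> carrier (G 0)"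
  by (auto simp: sX_def less_Suc_eq numeral_2_eq_2 One_nat_def)

lemma sX3: "[u, x, g] \<in> sX G 3 \<longleftrightarrow> u \<in> carrier (G 2) \<and> x \<in> carrier (G 1) \<and> g \<in> carrier (G 0)"
  by (auto simp: sX_def less_Suc_eq numeral_3_eq_3 numeral_2_eq_2 One_nat_def)

lemma sX2E:
  assumes xs: "xs \<in> sX G 2"
  obtains x g where "xs = [x, g]" "x \<in> carrier (G 1)" "g \<in> carrier (G 0)"
proof -
  obtain x g where "xs = [x, g]"
    using xs by (simp add: sX_def numeral_2_eq_2) (metis length_0_conv length_Suc_conv)
  with xs that show thesis by (simp add: sX2)
qed

lemma sX3E:
  assumes xs: "xs \<in> sX G 3"
  obtains u x g where "xs = [u, x, g]" "u \<in> carrier (G 2)" "x \<in> carrier (G 1)" "g \<in> carrier (G 0)"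
proof -
  obtain u x g where "xs = [u, x, g]"
    using xs by (simp add: sX_def numeral_3_eq_3) (metis length_0_conv length_Suc_conv)
  with xs that show thesis by (simp add: sX3)
qed

lemma sdiff1_eq: "[x, g] \<in> sX G 2 \<Longrightarrow>
    sdiff G d 1 c [x, g] = c [d 1 0 x] - c [d 1 1 x \<otimes>\<^bsub>G 0\<^esub> g] + c [g]"
  by (simp add: sdiff_def Let_def numeral_eq_Suc upt_rec One_nat_def)

lemma sdiff2_eq: "[u, x, g] \<in> sX G 3 \<Longrightarrow>
    sdiff G d 2 c [u, x, g] = c [d 2 0 u, d 1 0 x] - c [d 2 1 u, d 1 1 x \<otimes>\<^bsub>G 0\<^esub> g]
      + c [d 2 2 u \<otimes>\<^bsub>G 1\<^esub> x, g] - c [x, g]"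
  by (simp add: sdiff_def Let_def numeral_eq_Suc upt_rec One_nat_def)

lemma sdiff_closed: "sdiff G d n c \<in> carrier (cochain_grp (sX G (Suc n)))"
  by (simp add: cochain_carrier sdiff_def)

lemma sdiff1_closed: "sdiff G d 1 c \<in> carrier (cochain_grp (sX G 2))"
  using sdiff_closed[of 1] by (simp add: numeral_2_eq_2 One_nat_def)

lemma sdiff2_closed: "sdiff G d 2 c \<in> carrier (cochain_grp (sX G 3))"
  using sdiff_closed[of 2] by (simp add: numeral_3_eq_3)

lemma sdiff1_hom: "sdiff G d 1 \<in> hom (cochain_grp (sX G 1)) (cochain_grp (sX G 2))"
proof (rule cochain_homI[OF sdiff1_closed])
  fix c c' :: "'a list \<Rightarrow> int" and y assume "y \<in> sX G 2"
  then show "sdiff G d 1 (\<lambda>a\<in>sX G 1. c a + c' a) y = sdiff G d 1 c y + sdiff G d 1 c' y"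
    by (rule sX2E) (simp add: sdiff1_eq sX1 sX2)
qed

lemma sdiff2_hom: "sdiff G d 2 \<in> hom (cochain_grp (sX G 2)) (cochain_grp (sX G 3))"
proof (rule cochain_homI[OF sdiff2_closed])
  fix c c' :: "'a list \<Rightarrow> int" and y assume "y \<in> sX G 3"
  then show "sdiff G d 2 (\<lambda>a\<in>sX G 2. c a + c' a) y = sdiff G d 2 c y + sdiff G d 2 c' y"
    by (rule sX3E) (simp add: sdiff2_eq sX2 sX3)
qed

lemma sdiff_square_zero: "sdiff G d 2 (sdiff G d 1 f) = \<one>\<^bsub>cochain_grp (sX G 3)\<^esub>"
proof (rule cochain_eqI)
  interpret G0: group "G 0" by (rule G0)
  show "sdiff G d 2 (sdiff G d 1 f) y = \<one>\<^bsub>cochain_grp (sX G 3)\<^esub> y" if "y \<in> sX G 3" for y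
    using that by (rule sX3E) (simp add: sdiff2_eq sdiff1_eq cochain_one sX2 sX3 G0.m_assoc)
qed (simp_all add: sdiff2_closed cochain_one_closed)

abbreviation ZG where "ZG \<equiv> cocycle_grp (sX G 2) (sX G 3) (sdiff G d 2)"
abbreviation BG where "BG \<equiv> sdiff G d 1 ` carrier (cochain_grp (sX G 1))"
abbreviation ZQ where "ZQ \<equiv> cocycle_grp (gX Q 2) (gX Q 3) (gdiff Q 2)"
abbreviation BQ where "BQ \<equiv> gdiff Q 1 ` carrier (cochain_grp (gX Q 1))"

definition infl1 :: "('a set list \<Rightarrow> int) \<Rightarrow> ('a list \<Rightarrow> int)" where
  "infl1 f = (\<lambda>xs \<in> sX G 1. f [cls (xs ! 0)])"

definition infl2 :: "('a set list \<Rightarrow> int) \<Rightarrow> ('a list \<Rightarrow> int)" where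
  "infl2 f = (\<lambda>xs \<in> sX G 2. f [cls (d 1 0 (xs ! 0)), cls (xs ! 1)])"

lemma infl1_eq: "[g] \<in> sX G 1 \<Longrightarrow> infl1 f [g] = f [cls g]"
  by (simp add: infl1_def)

lemma infl2_eq: "[x, g] \<in> sX G 2 \<Longrightarrow> infl2 f [x, g] = f [cls (d 1 0 x), cls g]"
  by (simp add: infl2_def)

lemma infl1_closed: "infl1 f \<in> carrier (cochain_grp (sX G 1))"
  by (simp add: cochain_carrier infl1_def)

lemma infl2_closed: "infl2 f \<in> carrier (cochain_grp (sX G 2))"
  by (simp add: cochain_carrier infl2_def)

lemma infl2_hom: "infl2 \<in> hom (cochain_grp (gX Q 2)) (cochain_grp (sX G 2))"
proof (rule cochain_homI)
  fix c c' :: "'a set list \<Rightarrow> int" and y assume "y \<in> sX G 2"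
  then show "infl2 (\<lambda>a\<in>gX Q 2. c a + c' a) y = infl2 c y + infl2 c' y"
    by (rule sX2E) (simp add: infl2_eq gX2 sX2)
qed (rule infl2_closed)

lemma infl2_coboundary: "infl2 (gdiff Q 1 b) = sdiff G d 1 (infl1 b)"
proof (rule cochain_eqI)
  show "infl2 (gdiff Q 1 b) y = sdiff G d 1 (infl1 b) y" if "y \<in> sX G 2" for y
    using that by (rule sX2E) (simp add: infl2_eq sdiff1_eq gdiff1_eq infl1_eq gX2 sX1 sX2 cls_mult)
qed (simp_all add: infl2_closed sdiff1_closed)

lemma sdiff2_infl2:
  assumes "[u, x, g] \<in> sX G 3"
  shows "sdiff G d 2 (infl2 f) [u, x, g]
    = - gdiff Q 2 f [cls (d 1 0 (d 2 0 u)), cls (d 1 0 x), cls g]"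
  using assms by (simp add: sX3 infl2_eq sdiff2_eq gdiff2_eq gX3 sX2 cls_mult)

lemma infl2_cocycle_hom: "infl2 \<in> hom ZQ ZG"
proof (rule homI)
  fix f assume f: "f \<in> carrier ZQ"
  have "sdiff G d 2 (infl2 f) = \<one>\<^bsub>cochain_grp (sX G 3)\<^esub>"
  proof (rule cochain_eqI)
    show "sdiff G d 2 (infl2 f) y = \<one>\<^bsub>cochain_grp (sX G 3)\<^esub> y" if "y \<in> sX G 3" for y
      using that
    proof (rule sX3E)
      fix u x g assume y: "y = [u, x, g]" and ux: "u \<in> carrier (G 2)" "x \<in> carrier (G 1)"
        and g: "g \<in> carrier (G 0)"
      have "gdiff Q 2 f [cls (d 1 0 (d 2 0 u)), cls (d 1 0 x), cls g] = 0"
        using fun_cong[of _ _ "[cls (d 1 0 (d 2 0 u)), cls (d 1 0 x), cls g]"] f ux g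
        by (simp add: cocycle_grp_carrier cochain_one gX3)
      then show ?thesis using that sdiff2_infl2[of u x g f] by (simp add: y cochain_one)
    qed
  qed (simp_all add: sdiff2_closed cochain_one_closed)
  then show "infl2 f \<in> carrier ZG" by (simp add: cocycle_grp_carrier infl2_closed)
next
  fix f f' assume "f \<in> carrier ZQ" "f' \<in> carrier ZQ"
  then show "infl2 (f \<otimes>\<^bsub>ZQ\<^esub> f') = infl2 f \<otimes>\<^bsub>ZG\<^esub> infl2 f'"
    using infl2_hom by (simp add: hom_def cocycle_grp_carrier cocycle_grp_mult)
qed

(* Injectivity.  If infl2 f = d b, then b is constant on classes of pi_0 ... *)
lemma infl2_coboundary_values:
  assumes e: "infl2 f = sdiff G d 1 b" and x: "x \<in> carrier (G 1)" and g: "g \<in> carrier (G 0)"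
  shows "f [cls (d 1 0 x), cls g] = b [d 1 0 x] - b [d 1 1 x \<otimes>\<^bsub>G 0\<^esub> g] + b [g]"
proof -
  have "[x, g] \<in> sX G 2" using x g by (simp add: sX2)
  then show ?thesis using fun_cong[OF e, of "[x, g]"] by (simp add: infl2_eq sdiff1_eq)
qed

lemma infl2_coboundary_cls_invariant:
  assumes e: "infl2 f = sdiff G d 1 b"
    and g: "g \<in> carrier (G 0)" and h: "h \<in> carrier (G 0)" and gh: "cls g = cls h"
  shows "b [g] = b [h]"
proof -
  have unit: "f [cls h', cls \<one>\<^bsub>G 0\<^esub>] = b [\<one>\<^bsub>G 0\<^esub>]" if "h' \<in> carrier (G 0)" for h'
    using infl2_coboundary_values[OF e, of "s 0 0 h'" "\<one>\<^bsub>G 0\<^esub>"] that by simp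
  obtain k where k: "k \<in> B0 G d" and gkh: "g = k \<otimes>\<^bsub>G 0\<^esub> h" using cls_eqD[OF g h gh] by blast
  obtain n where n: "n \<in> N1 G d" and kn: "k = d 1 0 n" using k unfolding B0_def by auto
  have nc: "n \<in> carrier (G 1)" using N1D[OF n] by simp
  have "f [cls (k \<otimes>\<^bsub>G 0\<^esub> h), cls \<one>\<^bsub>G 0\<^esub>] = b [k \<otimes>\<^bsub>G 0\<^esub> h] - b [h] + b [\<one>\<^bsub>G 0\<^esub>]"
    using infl2_coboundary_values[OF e, of "n \<otimes>\<^bsub>G 1\<^esub> s 0 0 h" "\<one>\<^bsub>G 0\<^esub>"] nc h kn N1D[OF n]
    by simp
  moreover have "cls (k \<otimes>\<^bsub>G 0\<^esub> h) = cls h" using cls_eqI k h by simp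
  ultimately show ?thesis using unit[OF h] gkh by simp
qed

(* ... and therefore f is the coboundary of b composed with the chosen lifts. *)
lemma infl2_reflects_coboundaries:
  assumes f: "f \<in> carrier (cochain_grp (gX Q 2))" and e: "infl2 f = sdiff G d 1 b"
  shows "f \<in> BQ"
proof -
  define b' where "b' = (\<lambda>xs \<in> gX Q 1. b [lift (xs ! 0)])"
  have "f = gdiff Q 1 b'"
  proof (rule cochain_eqI[OF f])
    fix y assume "y \<in> gX Q 2"
    then show "f y = gdiff Q 1 b' y"
    proof (rule gX2E)
      fix q1 q2 assume y: "y = [q1, q2]" and q: "q1 \<in> carrier Q" "q2 \<in> carrier Q"
      let ?h = "lift q1" and ?g = "lift q2"
      have hg: "?h \<in> carrier (G 0)" "?g \<in> carrier (G 0)" using q by simp_all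
      have qq: "q1 \<otimes>\<^bsub>Q\<^esub> q2 \<in> carrier Q"
        using q pi0_group by (simp add: group.is_monoid monoid.m_closed)
      have "f [q1, q2] = b [?h] - b [?h \<otimes>\<^bsub>G 0\<^esub> ?g] + b [?g]"
        using infl2_coboundary_values[OF e, of "s 0 0 ?h" ?g] hg q by simp
      moreover have "cls (lift (q1 \<otimes>\<^bsub>Q\<^esub> q2)) = cls (?h \<otimes>\<^bsub>G 0\<^esub> ?g)"
        using qq q hg by (simp add: cls_mult)
      then have "b [lift (q1 \<otimes>\<^bsub>Q\<^esub> q2)] = b [?h \<otimes>\<^bsub>G 0\<^esub> ?g]"
        using infl2_coboundary_cls_invariant[OF e] qq hg by simp
      ultimately show ?thesis using q qq by (simp add: y gdiff1_eq b'_def gX1 gX2)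
    qed
  qed (rule gdiff1_closed)
  moreover have "b' \<in> carrier (cochain_grp (gX Q 1))" by (simp add: b'_def cochain_carrier)
  ultimately show ?thesis by blast
qed

lemma infl2_cocycle_coboundary_iff:
  assumes "f \<in> carrier ZQ" shows "infl2 f \<in> BG \<longleftrightarrow> f \<in> BQ"
proof
  assume "infl2 f \<in> BG"
  then obtain b where "infl2 f = sdiff G d 1 b" by blast
  then show "f \<in> BQ" using assms infl2_reflects_coboundaries by (simp add: cocycle_grp_carrier)
next
  assume "f \<in> BQ"
  then obtain b where "f = gdiff Q 1 b" by blast
  then show "infl2 f \<in> BG" using infl2_coboundary infl1_closed by blast
qed

definition is_cocycle :: "('a list \<Rightarrow> int) \<Rightarrow> bool" where
  "is_cocycle c \<longleftrightarrow> (\<forall>u\<in>carrier (G 2). \<forall>x\<in>carrier (G 1). \<forall>g\<in>carrier (G 0).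
     c [d 2 0 u, d 1 0 x] - c [d 2 1 u, d 1 1 x \<otimes>\<^bsub>G 0\<^esub> g] + c [d 2 2 u \<otimes>\<^bsub>G 1\<^esub> x, g] - c [x, g] = 0)"

lemma is_cocycle_iff_sdiff2:
  assumes "c \<in> carrier (cochain_grp (sX G 2))"
  shows "is_cocycle c \<longleftrightarrow> c \<in> carrier ZG"
proof -
  have "sdiff G d 2 c = \<one>\<^bsub>cochain_grp (sX G 3)\<^esub> \<longleftrightarrow> (\<forall>y\<in>sX G 3. sdiff G d 2 c y = 0)"
    using cochain_eqI[OF sdiff2_closed cochain_one_closed] by (auto simp: cochain_one)
  also have "\<dots> \<longleftrightarrow> is_cocycle c"
    unfolding is_cocycle_def
  proof (intro iffI ballI)
    fix u x g assume "\<forall>y\<in>sX G 3. sdiff G d 2 c y = 0"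
      and "u \<in> carrier (G 2)" "x \<in> carrier (G 1)" "g \<in> carrier (G 0)"
    then show "c [d 2 0 u, d 1 0 x] - c [d 2 1 u, d 1 1 x \<otimes>\<^bsub>G 0\<^esub> g]
        + c [d 2 2 u \<otimes>\<^bsub>G 1\<^esub> x, g] - c [x, g] = 0"
      using sdiff2_eq[of u x g c] by (simp add: sX3)
  next
    fix y assume "\<forall>u\<in>carrier (G 2). \<forall>x\<in>carrier (G 1). \<forall>g\<in>carrier (G 0).
        c [d 2 0 u, d 1 0 x] - c [d 2 1 u, d 1 1 x \<otimes>\<^bsub>G 0\<^esub> g] + c [d 2 2 u \<otimes>\<^bsub>G 1\<^esub> x, g] - c [x, g] = 0"
      and "y \<in> sX G 3"
    then show "sdiff G d 2 c y = 0" by (auto simp: sdiff2_eq sX3 elim!: sX3E)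
  qed
  finally show ?thesis using assms by (simp add: cocycle_grp_carrier)
qed

lemma is_cocycle_minus_coboundary:
  assumes "is_cocycle c"
  shows "is_cocycle (\<lambda>xs \<in> sX G 2. c xs - sdiff G d 1 b xs)"
  unfolding is_cocycle_def
proof (intro ballI)
  fix u x g assume u: "u \<in> carrier (G 2)" and x: "x \<in> carrier (G 1)" and g: "g \<in> carrier (G 0)"
  then have "[u, x, g] \<in> sX G 3" by (simp add: sX3)
  then have "sdiff G d 1 b [d 2 0 u, d 1 0 x] - sdiff G d 1 b [d 2 1 u, d 1 1 x \<otimes>\<^bsub>G 0\<^esub> g]
      + sdiff G d 1 b [d 2 2 u \<otimes>\<^bsub>G 1\<^esub> x, g] - sdiff G d 1 b [x, g] = 0"
    using fun_cong[OF sdiff_square_zero[of b], of "[u, x, g]"] by (simp add: sdiff2_eq cochain_one)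
  moreover have "c [d 2 0 u, d 1 0 x] - c [d 2 1 u, d 1 1 x \<otimes>\<^bsub>G 0\<^esub> g]
      + c [d 2 2 u \<otimes>\<^bsub>G 1\<^esub> x, g] - c [x, g] = 0"
    using assms u x g by (simp add: is_cocycle_def)
  ultimately show "(\<lambda>xs \<in> sX G 2. c xs - sdiff G d 1 b xs) [d 2 0 u, d 1 0 x]
      - (\<lambda>xs \<in> sX G 2. c xs - sdiff G d 1 b xs) [d 2 1 u, d 1 1 x \<otimes>\<^bsub>G 0\<^esub> g]
      + (\<lambda>xs \<in> sX G 2. c xs - sdiff G d 1 b xs) [d 2 2 u \<otimes>\<^bsub>G 1\<^esub> x, g]
      - (\<lambda>xs \<in> sX G 2. c xs - sdiff G d 1 b xs) [x, g] = 0"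
    using u x g by (simp add: sX2)
qed

end

(* A fixed simplicial 2-cocycle c, and the identities obtained by evaluating the cocycle
   condition at degenerate simplices. *)
locale simplicial_cocycle = simplicial +
  fixes c :: "'a list \<Rightarrow> int"
  assumes cocycle: "is_cocycle c"
begin

lemma cocycle_identity:
  "u \<in> carrier (G 2) \<Longrightarrow> x \<in> carrier (G 1) \<Longrightarrow> g \<in> carrier (G 0) \<Longrightarrow>
   c [d 2 0 u, d 1 0 x] - c [d 2 1 u, d 1 1 x \<otimes>\<^bsub>G 0\<^esub> g] + c [d 2 2 u \<otimes>\<^bsub>G 1\<^esub> x, g] - c [x, g] = 0"
  using cocycle by (simp add: is_cocycle_def)

(* The value of c at the unit; it plays the role of the normalising constant. *)
definition kappa :: int where "kappa = c [e1, e0]"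

lemma cocycle_unit_row: "g \<in> carrier (G 0) \<Longrightarrow> c [e1, g] = kappa"
  using cocycle_identity[of e2 e1 g] by (simp add: kappa_def)

lemma cocycle_split:
  "y \<in> carrier (G 1) \<Longrightarrow> g \<in> carrier (G 0) \<Longrightarrow> c [y, g] = c [y, e0] + c [s 0 0 (d 1 1 y), g] - kappa"
  using cocycle_identity[of "s 1 0 y" e1 g] cocycle_unit_row by simp

lemma cocycle_degenerate:
  "k \<in> carrier (G 0) \<Longrightarrow> h \<in> carrier (G 0) \<Longrightarrow> g \<in> carrier (G 0) \<Longrightarrow>
   c [s 0 0 k, h] - c [s 0 0 k, h \<otimes>\<^bsub>G 0\<^esub> g] + c [s 0 0 (k \<otimes>\<^bsub>G 0\<^esub> h), g] - c [s 0 0 h, g] = 0"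
  using cocycle_identity[of "s 1 0 (s 0 0 k)" "s 0 0 h" g] by simp

lemma cocycle_product:
  "y \<in> carrier (G 1) \<Longrightarrow> w \<in> carrier (G 1) \<Longrightarrow>
   c [s 0 0 (d 1 0 y), d 1 0 w] - c [y, d 1 1 w] + c [y \<otimes>\<^bsub>G 1\<^esub> w, e0] - c [w, e0] = 0"
  using cocycle_identity[of "s 1 1 y" w e0] by simp

lemma cocycle_boundary: "u \<in> N2 G d \<Longrightarrow> c [d 2 0 u, e0] = kappa"
  using cocycle_identity[of u e1 e0] by (simp add: N2_def kappa_def)

lemma cocycle_degenerate_unit: "h \<in> carrier (G 0) \<Longrightarrow> c [s 0 0 h, e0] = kappa"
  using cocycle_product[of "s 0 0 h" e1] by (simp add: kappa_def)

lemma cocycle_Z1_mult: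
  "z \<in> Z1 \<Longrightarrow> w \<in> carrier (G 1) \<Longrightarrow> c [z \<otimes>\<^bsub>G 1\<^esub> w, e0] = c [z, e0] + c [w, e0] - kappa"
  using cocycle_product[of z w] cocycle_split[of z "d 1 1 w"] Z1D[of z] cocycle_unit_row by simp

lemma cocycle_Z1_pow:
  "z \<in> Z1 \<Longrightarrow> c [z [^]\<^bsub>G 1\<^esub> (j::nat), e0] = int j * (c [z, e0] - kappa) + kappa"
proof (induction j)
  case 0 then show ?case by (simp add: kappa_def)
next
  case (Suc j)
  have zc: "z \<in> carrier (G 1)" using Z1D Suc by auto
  have "z [^]\<^bsub>G 1\<^esub> Suc j = z \<otimes>\<^bsub>G 1\<^esub> z [^]\<^bsub>G 1\<^esub> j"
    by (rule monoid.nat_pow_Suc2[OF group.is_monoid[OF G1] zc])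
  moreover have "z [^]\<^bsub>G 1\<^esub> j \<in> carrier (G 1)" using Z1_pow[OF Suc.prems] Z1D by auto
  ultimately have "c [z [^]\<^bsub>G 1\<^esub> Suc j, e0] = c [z, e0] + c [z [^]\<^bsub>G 1\<^esub> j, e0] - kappa"
    using cocycle_Z1_mult[OF Suc.prems] by simp
  then show ?case using Suc.IH[OF Suc.prems] by (simp add: algebra_simps)
qed

lemma cocycle_N1_degenerate_mult:
  "n \<in> N1 G d \<Longrightarrow> h \<in> carrier (G 0) \<Longrightarrow>
   c [n \<otimes>\<^bsub>G 1\<^esub> s 0 0 h, e0] = kappa + c [n, e0] - c [s 0 0 (d 1 0 n), h]"
  using cocycle_product[of n "s 0 0 h"] cocycle_split[of n h] N1D[of n] cocycle_unit_row
    cocycle_degenerate_unit by simp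

lemma cocycle_N1_mult:
  "n \<in> N1 G d \<Longrightarrow> w \<in> N1 G d \<Longrightarrow>
   c [n \<otimes>\<^bsub>G 1\<^esub> w, e0] = c [w, e0] + c [n, e0] - c [s 0 0 (d 1 0 n), d 1 0 w]"
  using cocycle_product[of n w] cocycle_split[of n e0] N1D[of n] N1D[of w] cocycle_unit_row by simp

end

(* A reduced cocycle is one that only depends on the degenerate part s_0(d_1 x) of its first
   argument.  Such cocycles come from pi_0. *)
locale reduced_cocycle = simplicial_cocycle +
  assumes cochain: "c \<in> carrier (cochain_grp (sX G 2))"
    and degenerate_rows: "\<And>x g. x \<in> carrier (G 1) \<Longrightarrow> g \<in> carrier (G 0) \<Longrightarrow>
      c [x, g] = c [s 0 0 (d 1 1 x), g]"
begin

lemma unit_column: "y \<in> carrier (G 1) \<Longrightarrow> c [y, e0] = kappa"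
  using degenerate_rows[of y e0] cocycle_degenerate_unit[of "d 1 1 y"] by simp

lemma first_face_invariant:
  "y \<in> carrier (G 1) \<Longrightarrow> g \<in> carrier (G 0) \<Longrightarrow> c [s 0 0 (d 1 0 y), g] = c [s 0 0 (d 1 1 y), g]"
  using cocycle_identity[of "s 1 1 y" "s 0 0 g" e0] degenerate_rows[of y g]
    unit_column[of "y \<otimes>\<^bsub>G 1\<^esub> s 0 0 g"] unit_column[of "s 0 0 g"] by simp

lemma second_face_invariant:
  "h \<in> carrier (G 0) \<Longrightarrow> y \<in> carrier (G 1) \<Longrightarrow> c [s 0 0 h, d 1 0 y] = c [s 0 0 h, d 1 1 y]"
  using cocycle_identity[of "s 1 0 (s 0 0 h)" y e0] unit_column[of "s 0 0 h \<otimes>\<^bsub>G 1\<^esub> y"]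
    unit_column[of y] by simp

lemma cls_invariant:
  assumes "h \<in> carrier (G 0)" "h' \<in> carrier (G 0)" "g \<in> carrier (G 0)" "g' \<in> carrier (G 0)"
    and "cls h = cls h'" "cls g = cls g'"
  shows "c [s 0 0 h, g] = c [s 0 0 h', g']"
proof -
  obtain y where y: "y \<in> carrier (G 1)" "d 1 0 y = h" "d 1 1 y = h'" using cls_eq_faces assms by blast
  obtain z where z: "z \<in> carrier (G 1)" "d 1 0 z = g" "d 1 1 z = g'" using cls_eq_faces assms by blast
  show ?thesis using first_face_invariant[OF y(1) assms(3)] second_face_invariant[OF assms(2) z(1)] y z
    by simp
qed

definition descended :: "'a set list \<Rightarrow> int" where
  "descended = (\<lambda>xs \<in> gX Q 2. c [s 0 0 (lift (xs ! 0)), lift (xs ! 1)])"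

lemma eq_infl2_descended: "c = infl2 descended"
proof (rule cochain_eqI[OF cochain infl2_closed])
  fix y assume "y \<in> sX G 2"
  then show "c y = infl2 descended y"
  proof (rule sX2E)
    fix x g assume y: "y = [x, g]" and x: "x \<in> carrier (G 1)" and g: "g \<in> carrier (G 0)"
    have "c [x, g] = c [s 0 0 (d 1 1 x), g]" by (rule degenerate_rows[OF x g])
    also have "\<dots> = c [s 0 0 (lift (cls (d 1 0 x))), lift (cls g)]"
      using x g by (intro cls_invariant) simp_all
    finally show ?thesis using x g by (simp add: y infl2_eq descended_def gX2 sX2)
  qed
qed

(* The descended function is a cocycle of pi_0, since its inflation is a simplicial cocycle. *)
lemma descended_cocycle: "descended \<in> carrier ZQ"
proof -
  have "c \<in> carrier ZG" using is_cocycle_iff_sdiff2[OF cochain] cocycle by simp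
  then have vanish: "sdiff G d 2 (infl2 descended) y = 0" if "y \<in> sX G 3" for y
    using that eq_infl2_descended by (simp add: cocycle_grp_carrier cochain_one)
  have "gdiff Q 2 descended = \<one>\<^bsub>cochain_grp (gX Q 3)\<^esub>"
  proof (rule cochain_eqI[OF gdiff2_closed cochain_one_closed])
    fix y assume "y \<in> gX Q 3"
    then show "gdiff Q 2 descended y = \<one>\<^bsub>cochain_grp (gX Q 3)\<^esub> y"
    proof (rule gX3E)
      fix A B C assume y: "y = [A, B, C]" and q: "A \<in> carrier Q" "B \<in> carrier Q" "C \<in> carrier Q"
      let ?u = "s 1 0 (s 0 0 (lift A))" and ?x = "s 0 0 (lift B)" and ?g = "lift C"
      have "[?u, ?x, ?g] \<in> sX G 3" using q by (simp add: sX3)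
      then have "gdiff Q 2 descended [cls (d 1 0 (d 2 0 ?u)), cls (d 1 0 ?x), cls ?g] = 0"
        using vanish[of "[?u, ?x, ?g]"] sdiff2_infl2[of ?u ?x ?g descended] by simp
      then show ?thesis using q by (simp add: y cochain_one gX3)
    qed
  qed
  then show ?thesis by (simp add: cocycle_grp_carrier descended_def cochain_carrier)
qed

end

locale finite_pi1_cocycle = simplicial_cocycle +
  assumes finite_pi1: "finite (carrier (pi1 G d))"
begin

(* c(z, 1) = kappa on 1-cycles: the additive map z |-> c(z, 1) - kappa kills a power of z. *)
lemma cocycle_Z1_trivial: "z \<in> Z1 \<Longrightarrow> c [z, e0] = kappa"
proof -
  assume z: "z \<in> Z1"
  obtain j where j: "j > 0" "z [^]\<^bsub>G 1\<^esub> (j::nat) \<in> B1 G d"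
    using finite_pi1_torsion[OF finite_pi1 z] by blast
  then obtain u where "u \<in> N2 G d" "z [^]\<^bsub>G 1\<^esub> j = d 2 0 u" unfolding B1_def by auto
  then have "c [z [^]\<^bsub>G 1\<^esub> j, e0] = kappa" using cocycle_boundary by simp
  then have "int j * (c [z, e0] - kappa) = 0" using cocycle_Z1_pow[OF z, of j] by simp
  then show ?thesis using j by simp
qed

lemma cocycle_N1_d0:
  assumes n: "n \<in> N1 G d" and m: "m \<in> N1 G d" and e: "d 1 0 n = d 1 0 m"
  shows "c [n, e0] = c [m, e0]"
proof -
  interpret G0: group "G 0" by (rule G0)
  interpret G1: group "G 1" by (rule G1)
  have nc: "n \<in> carrier (G 1)" and mc: "m \<in> carrier (G 1)" using n m N1D by auto
  let ?z = "n \<otimes>\<^bsub>G 1\<^esub> inv\<^bsub>G 1\<^esub> m"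
  have zZ: "?z \<in> Z1" using nc mc e N1D[OF n] N1D[OF m] by (simp add: Z1_def N1_def)
  have "?z \<otimes>\<^bsub>G 1\<^esub> m = n" using nc mc by (simp add: G1.m_assoc)
  then show ?thesis using cocycle_Z1_mult[OF zZ mc] cocycle_Z1_trivial[OF zZ] by simp
qed

definition beta :: "'a \<Rightarrow> int" where
  "beta g = c [nu g, e0] - kappa - c [s 0 0 (g \<otimes>\<^bsub>G 0\<^esub> inv\<^bsub>G 0\<^esub> (canon g)), canon g]"

lemma beta_translate:
  assumes nN: "n \<in> N1 G d" and hc: "h \<in> carrier (G 0)"
  shows "beta (d 1 0 n \<otimes>\<^bsub>G 0\<^esub> h) = beta h + c [n, e0] - c [s 0 0 (d 1 0 n), h]"
proof -
  interpret G0: group "G 0" by (rule G0)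
  define k where "k = d 1 0 n"
  have nc: "n \<in> carrier (G 1)" using nN N1D by auto
  have kB: "k \<in> B0 G d" using nN by (simp add: k_def B0_def)
  have kc: "k \<in> carrier (G 0)" using nc by (simp add: k_def)
  have canon_kh: "canon (k \<otimes>\<^bsub>G 0\<^esub> h) = canon h" using cls_eqI[OF kB hc] by (simp add: canon_def)
  define \<rho> where "\<rho> = canon h"
  have \<rho>c: "\<rho> \<in> carrier (G 0)" using canon_closed[OF hc] by (simp add: \<rho>_def)
  define k' where "k' = h \<otimes>\<^bsub>G 0\<^esub> inv\<^bsub>G 0\<^esub> \<rho>"
  have k'c: "k' \<in> carrier (G 0)" using hc \<rho>c by (simp add: k'_def)
  have kh: "(k \<otimes>\<^bsub>G 0\<^esub> h) \<otimes>\<^bsub>G 0\<^esub> inv\<^bsub>G 0\<^esub> \<rho> = k \<otimes>\<^bsub>G 0\<^esub> k'"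
    using kc hc \<rho>c by (simp add: k'_def G0.m_assoc)
  have nuh: "nu h \<in> N1 G d" "d 1 0 (nu h) = k'" using nu_spec[OF hc] by (simp_all add: k'_def \<rho>_def)
  have nukh: "nu (k \<otimes>\<^bsub>G 0\<^esub> h) \<in> N1 G d" "d 1 0 (nu (k \<otimes>\<^bsub>G 0\<^esub> h)) = k \<otimes>\<^bsub>G 0\<^esub> k'"
    using nu_spec[of "k \<otimes>\<^bsub>G 0\<^esub> h"] kc hc kh canon_kh by (simp_all add: \<rho>_def)
  have nuhc: "nu h \<in> carrier (G 1)" using nuh N1D by auto
  have "n \<otimes>\<^bsub>G 1\<^esub> nu h \<in> N1 G d" "d 1 0 (n \<otimes>\<^bsub>G 1\<^esub> nu h) = k \<otimes>\<^bsub>G 0\<^esub> k'"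
    using nN nuh nc nuhc subgroup.m_closed[OF N1_sub] by (simp_all add: k_def)
  then have nu_kh: "c [nu (k \<otimes>\<^bsub>G 0\<^esub> h), e0] = c [nu h, e0] + c [n, e0] - c [s 0 0 k, k']"
    using cocycle_N1_d0[OF nukh(1)] nukh(2) cocycle_N1_mult[OF nN nuh(1)] nuh(2) by (simp add: k_def)
  have "k' \<otimes>\<^bsub>G 0\<^esub> \<rho> = h" using hc \<rho>c by (simp add: k'_def G0.m_assoc)
  then have degenerate:
    "c [s 0 0 k, k'] - c [s 0 0 k, h] + c [s 0 0 (k \<otimes>\<^bsub>G 0\<^esub> k'), \<rho>] - c [s 0 0 k', \<rho>] = 0"
    using cocycle_degenerate[OF kc k'c \<rho>c] by simp
  have "beta (k \<otimes>\<^bsub>G 0\<^esub> h) = c [nu (k \<otimes>\<^bsub>G 0\<^esub> h), e0] - kappa - c [s 0 0 (k \<otimes>\<^bsub>G 0\<^esub> k'), \<rho>]"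
    unfolding beta_def canon_kh using kh by (simp add: \<rho>_def)
  moreover have "beta h = c [nu h, e0] - kappa - c [s 0 0 k', \<rho>]"
    unfolding beta_def by (simp add: \<rho>_def k'_def)
  ultimately show ?thesis using nu_kh degenerate by (simp add: k_def)
qed

lemma cocycle_row_difference:
  assumes x: "x \<in> carrier (G 1)" shows "c [x, e0] - kappa = beta (d 1 0 x) - beta (d 1 1 x)"
proof -
  obtain n where nN: "n \<in> N1 G d" and xn: "x = n \<otimes>\<^bsub>G 1\<^esub> s 0 0 (d 1 1 x)"
    using G1_decompose[OF x] by blast
  have nc: "n \<in> carrier (G 1)" using nN N1D by auto
  have "d 1 0 x = d 1 0 n \<otimes>\<^bsub>G 0\<^esub> d 1 1 x" using nc x by (subst xn) simp
  moreover have "c [x, e0] = kappa + c [n, e0] - c [s 0 0 (d 1 0 n), d 1 1 x]"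
    using cocycle_N1_degenerate_mult[OF nN, of "d 1 1 x"] x xn by simp
  ultimately show ?thesis using beta_translate[OF nN, of "d 1 1 x"] x by simp
qed

definition beta_cochain :: "'a list \<Rightarrow> int" where "beta_cochain = (\<lambda>xs \<in> sX G 1. beta (xs ! 0))"

definition corrected :: "'a list \<Rightarrow> int" where
  "corrected = (\<lambda>xs \<in> sX G 2. c xs - sdiff G d 1 beta_cochain xs)"

lemma corrected_eq:
  "x \<in> carrier (G 1) \<Longrightarrow> g \<in> carrier (G 0) \<Longrightarrow>
   corrected [x, g] = c [x, g] - (beta (d 1 0 x) - beta (d 1 1 x \<otimes>\<^bsub>G 0\<^esub> g) + beta g)"
  by (simp add: corrected_def sX1 sX2 sdiff1_eq beta_cochain_def)

lemma corrected_reduced: "reduced_cocycle G d s corrected"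
proof unfold_locales
  show "is_cocycle corrected"
    unfolding corrected_def by (rule is_cocycle_minus_coboundary[OF cocycle])
  show "corrected \<in> carrier (cochain_grp (sX G 2))"
    by (simp add: corrected_def cochain_carrier)
  show "corrected [x, g] = corrected [s 0 0 (d 1 1 x), g]"
    if "x \<in> carrier (G 1)" "g \<in> carrier (G 0)" for x g
    using that corrected_eq[of x g] corrected_eq[of "s 0 0 (d 1 1 x)" g] cocycle_split[of x g]
      cocycle_row_difference[of x] by simp
qed

lemma cocycle_decomposition:
  assumes "c \<in> carrier (cochain_grp (sX G 2))"
  shows "c = infl2 (reduced_cocycle.descended G d s corrected)
    \<otimes>\<^bsub>cochain_grp (sX G 2)\<^esub> sdiff G d 1 beta_cochain"
proof -
  interpret corr: reduced_cocycle G d s corrected by (rule corrected_reduced)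
  show ?thesis
    unfolding corr.eq_infl2_descended[symmetric] cochain_mult
  proof (rule cochain_eqI[OF assms])
    show "(\<lambda>a\<in>sX G 2. corrected a + sdiff G d 1 beta_cochain a) \<in> carrier (cochain_grp (sX G 2))"
      by (simp add: cochain_carrier)
  qed (simp add: corrected_def)
qed

end

lemma (in simplicial) infl2_onto_modulo_coboundaries:
  assumes fin: "finite (carrier (pi1 G d))" and c: "c \<in> carrier ZG"
  shows "\<exists>f\<in>carrier ZQ. \<exists>b\<in>BG. c = infl2 f \<otimes>\<^bsub>ZG\<^esub> b"
proof -
  have cochain: "c \<in> carrier (cochain_grp (sX G 2))" using c by (simp add: cocycle_grp_carrier)
  interpret finite_pi1_cocycle G d s c
    using is_cocycle_iff_sdiff2[OF cochain] c fin
    by unfold_locales simp_all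
  interpret corr: reduced_cocycle G d s corrected by (rule corrected_reduced)
  have "beta_cochain \<in> carrier (cochain_grp (sX G 1))"
    by (simp add: beta_cochain_def cochain_carrier)
  then show ?thesis
    using corr.descended_cocycle cocycle_decomposition[OF cochain]
    by (auto simp: cocycle_grp_mult)
qed

theorem mainTheorem17:
  fixes G :: "nat \<Rightarrow> 'a monoid"
    and d :: "nat \<Rightarrow> nat \<Rightarrow> 'a \<Rightarrow> 'a"
    and s :: "nat \<Rightarrow> nat \<Rightarrow> 'a \<Rightarrow> 'a"
  assumes "simplicial_group G d s"
    and "finite (carrier (pi1 G d))"
  shows "sgrp_cohom G d 2 \<cong> grp_cohom (pi0 G d) 2"
proof -
  interpret simplicial G d s by (rule simplicial.intro) (rule assms(1))
  note Q_group = pi0_group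
  have "ZG Mod BG \<cong> ZQ Mod BQ"
  proof (rule quotient_iso_from_cocycle_map)
    show "comm_group ZQ" by (rule cocycle_grp_comm_group[OF gdiff2_hom[OF Q_group]])
    show "comm_group ZG" by (rule cocycle_grp_comm_group[OF sdiff2_hom])
    show "subgroup BQ ZQ"
      by (rule coboundary_subgroup[OF gdiff2_hom[OF Q_group] gdiff1_hom[OF Q_group]
            gdiff_square_zero[OF Q_group]])
    show "subgroup BG ZG" by (rule coboundary_subgroup[OF sdiff2_hom sdiff1_hom sdiff_square_zero])
  qed (use infl2_cocycle_hom infl2_onto_modulo_coboundaries[OF assms(2)]
      infl2_cocycle_coboundary_iff in auto)
  then show ?thesis
    by (simp add: sgrp_cohom_def grp_cohom_def cohom_grp_cocycle_grp One_nat_def)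
qed

end
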